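(* $$\sum_{n=0}^\infty \frac{\binom{2n}{n}}{(n+1)^3\, 2^{2n}} = 8 - 8\log 2 - \frac{\pi^2}{3} + 4(\log 2)^2.$$
   Context: $\binom{2n}{n}$ is the central binomial coefficient; $\log$ is the natural logarithm. *)

theory Defs
  imports Complex_Main
begin

end

theory Submission
  imports Defs "HOL-Analysis.Analysis" "HOL-Real_Asymp.Real_Asymp"
begin

(* With c n = (2n choose n) / 4^n we have (\<Sum>n. c n * x^n) = 1 / sqrt (1 - x), the binomial
   series of (1 - x) powr (-1/2). Dividing by x and integrating from 0, three times, and
   substituting x = 1 - s^2 gives closed forms for (\<Sum>n. c n / (n+1)^k * x^(n+1)), k = 1, 2, 3:
     2 - 2 s,
     4 (1 - s) + 4 ln ((1 + s) / 2),
     8 (1 - s) + 8 ln ((1 + s) / 2) - 4 dilog ((1 - s) / 2) + 2 ln ((1 + s) / 2)^2,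
   each verified by comparing derivatives in s. For k = 3 the coefficients are summable, so the
   series converges uniformly on [-1, 1] and the last identity extends to x = 1, i.e. s = 0, which
   is the sum in question. Euler's reflection formula for the dilogarithm gives
   dilog (1/2) = pi^2/12 - (ln 2)^2 / 2. *)

definition powser_primitive :: "(nat \<Rightarrow> real) \<Rightarrow> real \<Rightarrow> real" where
  "powser_primitive a x = (\<Sum>n. a n / Suc n * x ^ Suc n)"

lemma powser_primitive_0 [simp]: "powser_primitive a 0 = 0"
  by (simp add: powser_primitive_def)

lemma summable_powser_bounded:
  fixes a :: "nat \<Rightarrow> real"
  assumes "\<And>n. \<bar>a n\<bar> \<le> B" "\<bar>x\<bar> < 1"
  shows "summable (\<lambda>n. a n * x ^ n)"
proof (rule summable_comparison_test)
  show "\<exists>N. \<forall>n\<ge>N. norm (a n * x ^ n) \<le> B * \<bar>x\<bar> ^ n"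
    using assms(1) by (auto simp: abs_mult power_abs intro!: exI[of _ 0] mult_right_mono)
  show "summable (\<lambda>n. B * \<bar>x\<bar> ^ n)"
    using assms(2) by (simp add: summable_geometric)
qed

lemma abs_div_Suc_le:
  fixes a :: "nat \<Rightarrow> real"
  assumes "\<And>n. \<bar>a n\<bar> \<le> B"
  shows "\<bar>a n / Suc n\<bar> \<le> B"
proof -
  have "\<bar>a n / Suc n\<bar> \<le> \<bar>a n\<bar>"
    by (simp add: abs_divide divide_le_eq del: of_nat_Suc) (simp add: mult_le_cancel_left1)
  then show ?thesis using assms[of n] by linarith
qed

lemma has_real_derivative_powser_primitive:
  fixes a :: "nat \<Rightarrow> real"
  assumes "\<And>n. \<bar>a n\<bar> \<le> B" "\<bar>x\<bar> < 1"
  shows "(powser_primitive a has_real_derivative (\<Sum>n. a n * x ^ n)) (at x)"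
proof -
  have "(powser_primitive a has_real_derivative (\<Sum>n. a n / Suc n * Suc n * x ^ n)) (at x)"
    unfolding powser_primitive_def[abs_def] by (rule DERIV_power_series'[where R = 1])
      (use assms summable_powser_bounded[OF assms(1)] in \<open>auto simp del: of_nat_Suc\<close>)
  then show ?thesis
    by (simp del: of_nat_Suc)
qed

lemma powser_primitive_eq_mult:
  fixes a :: "nat \<Rightarrow> real"
  assumes "\<And>n. \<bar>a n\<bar> \<le> B" "\<bar>x\<bar> < 1"
  shows "powser_primitive a x = x * (\<Sum>n. a n / Suc n * x ^ n)"
proof -
  have "powser_primitive a x = (\<Sum>n. x * (a n / Suc n * x ^ n))"
    by (simp add: powser_primitive_def mult_ac)
  also have "\<dots> = x * (\<Sum>n. a n / Suc n * x ^ n)"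
    by (rule suminf_mult[OF summable_powser_bounded[OF abs_div_Suc_le[OF assms(1)] assms(2)]])
  finally show ?thesis .
qed

lemma has_real_derivative_powser_primitive_div_Suc:
  fixes a :: "nat \<Rightarrow> real"
  assumes "\<And>n. \<bar>a n\<bar> \<le> B" "\<bar>x\<bar> < 1" "x \<noteq> 0"
  shows "(powser_primitive (\<lambda>n. a n / Suc n) has_real_derivative powser_primitive a x / x) (at x)"
  using has_real_derivative_powser_primitive[OF abs_div_Suc_le[OF assms(1)] assms(2)]
  by (simp add: powser_primitive_eq_mult[OF assms(1,2)] assms(3))

lemma continuous_on_powser_primitive:
  fixes a :: "nat \<Rightarrow> real"
  assumes "summable (\<lambda>n. \<bar>a n\<bar> / Suc n)"
  shows "continuous_on {-1..1} (powser_primitive a)"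
proof -
  have "uniform_limit {-1..1} (\<lambda>N x. \<Sum>n<N. a n / Suc n * x ^ Suc n) (powser_primitive a)
      sequentially"
    unfolding powser_primitive_def
  proof (rule Weierstrass_m_test[OF _ assms])
    fix n and x :: real
    assume "x \<in> {-1..1}"
    then have "\<bar>x\<bar> ^ Suc n \<le> 1" by (intro power_le_one) auto
    then have "\<bar>a n\<bar> * \<bar>x\<bar> ^ Suc n \<le> \<bar>a n\<bar>" by (rule mult_left_le) simp
    then show "norm (a n / Suc n * x ^ Suc n) \<le> \<bar>a n\<bar> / Suc n"
      by (simp add: abs_mult power_abs divide_right_mono del: of_nat_Suc power_Suc)
  qed
  then show ?thesis
    by (rule uniform_limit_theorem[rotated]) (auto intro!: continuous_intros always_eventually)
qed

lemma powser_primitive_sums: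
  fixes a :: "nat \<Rightarrow> real"
  assumes "summable (\<lambda>n. \<bar>a n\<bar> / Suc n)"
  shows "(\<lambda>n. a n / Suc n) sums powser_primitive a 1"
proof -
  have "summable (\<lambda>n. a n / Suc n)"
    by (rule summable_comparison_test[OF _ assms]) (simp add: abs_divide del: of_nat_Suc)
  then show ?thesis by (simp add: powser_primitive_def summable_sums)
qed

lemma powser_primitive_const_1:
  assumes "\<bar>x\<bar> < 1"
  shows "powser_primitive (\<lambda>_. 1) x = - ln (1 - x)"
proof -
  have "(\<lambda>n. - (x ^ n) / n) sums ln (1 - x)"
    using ln_series'[of "-x"] assms by simp
  then have "(\<lambda>n. - (x ^ Suc n) / Suc n) sums ln (1 - x)"
    by (subst sums_Suc_iff) simp
  from sums_unique[OF sums_minus[OF this]] show ?thesis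
    by (simp add: powser_primitive_def del: of_nat_Suc)
qed

lemma eq_at_left_if_same_derivative:
  fixes f g :: "real \<Rightarrow> real"
  assumes "a \<le> b" "continuous_on {a..b} f" "continuous_on {a..b} g"
    and "\<And>t. a < t \<Longrightarrow> t < b \<Longrightarrow> (f has_real_derivative d t) (at t)"
    and "\<And>t. a < t \<Longrightarrow> t < b \<Longrightarrow> (g has_real_derivative d t) (at t)"
    and "f b = g b"
  shows "f a = g a"
proof (cases "a = b")
  case False
  have "((\<lambda>t. f t - g t) has_real_derivative 0) (at t)" if "a < t" "t < b" for t
    using DERIV_diff[OF assms(4,5)[OF that]] by simp
  with False assms(1-3) have "(\<lambda>t. f t - g t) b = (\<lambda>t. f t - g t) a"
    by (intro DERIV_isconst_end) (auto intro!: continuous_intros)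
  then show ?thesis using assms(6) by simp
qed (use assms in auto)

lemma has_real_derivative_comp_one_minus_square:
  assumes "(f has_real_derivative f') (at (1 - u\<^sup>2))"
  shows "((\<lambda>u. f (1 - u\<^sup>2)) has_real_derivative f' * (- 2 * u)) (at u)"
  using assms by (rule DERIV_chain2) (auto intro!: derivative_eq_intros)

lemma abs_one_minus_square_less:
  fixes u :: real
  assumes "0 < u" "u \<le> 1"
  shows "\<bar>1 - u\<^sup>2\<bar> < 1"
proof -
  have "0 < u\<^sup>2" "u\<^sup>2 \<le> 1"
    using assms by (auto intro: power_le_one)
  then show ?thesis by linarith
qed

lemma continuous_on_powser_primitive_one_minus_square:
  fixes a :: "nat \<Rightarrow> real"
  assumes "\<And>n. \<bar>a n\<bar> \<le> B" "0 < s"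
  shows "continuous_on {s..1} (\<lambda>u. powser_primitive a (1 - u\<^sup>2))"
proof (intro continuous_at_imp_continuous_on ballI)
  fix u
  assume "u \<in> {s..1}"
  then have "\<bar>1 - u\<^sup>2\<bar> < 1"
    using assms(2) by (intro abs_one_minus_square_less) auto
  then show "isCont (\<lambda>u. powser_primitive a (1 - u\<^sup>2)) u"
    by (rule DERIV_isCont[OF has_real_derivative_comp_one_minus_square[OF
          has_real_derivative_powser_primitive[OF assms(1)]]])
qed

lemma inverse_Suc_squares_sums: "(\<lambda>n. 1 / real (Suc n) ^ 2) sums (pi\<^sup>2 / 6)"
  using inverse_squares_sums by (simp add: add.commute)

definition dilog :: "real \<Rightarrow> real" where
  "dilog x = (\<Sum>n. x ^ Suc n / real (Suc n) ^ 2)"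

lemma dilog_conv_powser_primitive: "dilog = powser_primitive (\<lambda>n. 1 / Suc n)"
  by (simp add: fun_eq_iff dilog_def powser_primitive_def power2_eq_square del: of_nat_Suc)

lemma has_real_derivative_dilog:
  assumes "\<bar>x\<bar> < 1" "x \<noteq> 0"
  shows "(dilog has_real_derivative - ln (1 - x) / x) (at x)"
  using has_real_derivative_powser_primitive_div_Suc[of "\<lambda>_. 1" 1 x] assms
  by (simp add: dilog_conv_powser_primitive powser_primitive_const_1)

lemma continuous_on_dilog: "continuous_on {-1..1} dilog"
  unfolding dilog_conv_powser_primitive
  by (rule continuous_on_powser_primitive)
    (use sums_summable[OF inverse_Suc_squares_sums] in \<open>simp add: power2_eq_square del: of_nat_Suc\<close>)

lemma dilog_0 [simp]: "dilog 0 = 0"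
  by (simp add: dilog_def)

lemma dilog_1: "dilog 1 = pi\<^sup>2 / 6"
  using sums_unique[OF inverse_Suc_squares_sums] by (simp add: dilog_def)

lemma has_real_derivative_dilog_reflection:
  assumes "0 < y" "y < 1"
  shows "((\<lambda>y. dilog y + dilog (1 - y) + ln y * ln (1 - y)) has_real_derivative 0) (at y)"
proof -
  have "(dilog has_real_derivative - ln y / (1 - y)) (at (1 - y))"
    using has_real_derivative_dilog[of "1 - y"] assms by simp
  then have "((\<lambda>y. dilog (1 - y)) has_real_derivative - ln y / (1 - y) * -1) (at y)"
    by (rule DERIV_chain2) (auto intro!: derivative_eq_intros)
  moreover have "((\<lambda>y. ln y * ln (1 - y)) has_real_derivative ln (1 - y) / y - ln y / (1 - y)) (at y)"
    using assms by (auto intro!: derivative_eq_intros simp: field_simps)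
  ultimately have "((\<lambda>y. dilog y + dilog (1 - y) + ln y * ln (1 - y)) has_real_derivative
      - ln (1 - y) / y + - ln y / (1 - y) * -1 + (ln (1 - y) / y - ln y / (1 - y))) (at y)"
    using assms by (intro DERIV_add has_real_derivative_dilog) auto
  then show ?thesis by simp
qed

lemma dilog_reflection:
  assumes "0 < x" "x < 1"
  shows "dilog x + dilog (1 - x) + ln x * ln (1 - x) = pi\<^sup>2 / 6"
proof -
  define E where "E y = dilog y + dilog (1 - y) + ln y * ln (1 - y)" for y
  have E_const: "E y = E x" if "0 < y" "y < 1" for y
    using DERIV_isconst3[of 0 1 y x E] has_real_derivative_dilog_reflection that assms
    by (auto simp: E_def[abs_def])
  have near_0: "\<forall>\<^sub>F y in at_right 0. y \<in> {0<..<1::real}"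
    by (rule eventually_at_right_real) simp
  have "(E \<longlongrightarrow> dilog 0 + dilog 1 + 0) (at_right 0)"
    unfolding E_def
  proof (intro tendsto_add)
    show "(dilog \<longlongrightarrow> dilog 0) (at_right 0)"
      by (rule continuous_on_tendsto_compose[OF continuous_on_dilog tendsto_ident_at])
        (use near_0 in \<open>auto elim: eventually_mono\<close>)
    show "((\<lambda>y. dilog (1 - y)) \<longlongrightarrow> dilog 1) (at_right 0)"
      by (rule continuous_on_tendsto_compose[OF continuous_on_dilog])
        (use near_0 in \<open>auto elim: eventually_mono intro!: tendsto_eq_intros\<close>)
    show "((\<lambda>y::real. ln y * ln (1 - y)) \<longlongrightarrow> 0) (at_right 0)"
      by real_asymp
  qed
  moreover have "\<forall>\<^sub>F y in at_right 0. E y = E x"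
    using near_0 by eventually_elim (use E_const in auto)
  ultimately have "((\<lambda>_. E x) \<longlongrightarrow> dilog 0 + dilog 1 + 0) (at_right (0::real))"
    by (rule Lim_transform_eventually)
  then have "E x = dilog 0 + dilog 1 + 0"
    by (rule tendsto_const_iff[THEN iffD1, rotated]) simp
  then show ?thesis by (simp add: E_def dilog_1)
qed

lemma dilog_half: "dilog (1/2) = pi\<^sup>2 / 12 - (ln 2)\<^sup>2 / 2"
  using dilog_reflection[of "1/2"] by (simp add: ln_div power2_eq_square)

lemma has_real_derivative_ln_square_minus_dilog:
  assumes "-1 < u" "u < 1"
  shows "((\<lambda>u. 2 * (ln ((1 + u) / 2))\<^sup>2 - 4 * dilog ((1 - u) / 2)) has_real_derivative
    - 8 * u * ln ((1 + u) / 2) / (1 - u\<^sup>2)) (at u)"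
proof -
  have sq: "1 - u\<^sup>2 = (1 - u) * (1 + u)"
    by (simp add: algebra_simps power2_eq_square)
  have "(dilog has_real_derivative - 2 * ln ((1 + u) / 2) / (1 - u)) (at ((1 - u) / 2))"
    using has_real_derivative_dilog[of "(1 - u) / 2"] assms by (simp add: field_simps)
  then have "((\<lambda>u. dilog ((1 - u) / 2)) has_real_derivative
      - 2 * ln ((1 + u) / 2) / (1 - u) * (- 1 / 2)) (at u)"
    by (rule DERIV_chain2) (auto intro!: derivative_eq_intros)
  then have "((\<lambda>u. 2 * (ln ((1 + u) / 2))\<^sup>2 - 4 * dilog ((1 - u) / 2)) has_real_derivative
      2 * (2 * ln ((1 + u) / 2) * (1 / ((1 + u) / 2) * (1 / 2)))
        - 4 * (- 2 * ln ((1 + u) / 2) / (1 - u) * (- 1 / 2))) (at u)"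
    using assms by (auto intro!: derivative_eq_intros)
  moreover have "2 * (2 * ln ((1 + u) / 2) * (1 / ((1 + u) / 2) * (1 / 2)))
      - 4 * (- 2 * ln ((1 + u) / 2) / (1 - u) * (- 1 / 2)) =
      - 8 * u * ln ((1 + u) / 2) / (1 - u\<^sup>2)"
    using sq assms by (simp add: divide_simps) (simp add: algebra_simps)
  ultimately show ?thesis by simp
qed

definition cbin :: "nat \<Rightarrow> real" where
  "cbin n = real ((2 * n) choose n) / 4 ^ n"

lemma cbin_conv_gchoose: "cbin n = (-1) ^ n * ((-1/2) gchoose n)"
proof -
  have "real ((2 * n) choose n) = fact (2 * n) / (fact n * fact n)"
    by (simp add: binomial_fact)
  also have "\<dots> = 4 ^ n * pochhammer (1/2) n / fact n"
    by (simp add: fact_double power_mult)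
  finally show ?thesis
    by (simp add: cbin_def gbinomial_pochhammer flip: power_mult_distrib)
qed

lemma abs_cbin_le_1: "\<bar>cbin n\<bar> \<le> 1"
proof -
  have "real ((2 * n) choose n) \<le> 2 ^ (2 * n)"
    using binomial_le_pow2[of "2 * n" n] by (metis of_nat_le_iff of_nat_numeral of_nat_power)
  then show ?thesis
    by (simp add: cbin_def power_mult)
qed

lemma cbin_sums: "\<bar>x\<bar> < 1 \<Longrightarrow> (\<lambda>n. cbin n * x ^ n) sums (1 / sqrt (1 - x))"
  using gen_binomial_real[of "-x" "-1/2"]
  by (simp add: cbin_conv_gchoose power_minus' mult_ac powr_minus_divide powr_half_sqrt)

lemma powser_primitive_cbin:
  assumes "0 < s" "s \<le> 1"
  shows "powser_primitive cbin (1 - s\<^sup>2) = 2 - 2 * s"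
proof (rule eq_at_left_if_same_derivative[of s 1
      "\<lambda>u. powser_primitive cbin (1 - u\<^sup>2)" "\<lambda>u. 2 - 2 * u" "\<lambda>_. -2"])
  show "continuous_on {s..1} (\<lambda>u. powser_primitive cbin (1 - u\<^sup>2))"
    using assms by (intro continuous_on_powser_primitive_one_minus_square[of cbin 1, OF abs_cbin_le_1])
  fix u :: real
  assume u: "s < u" "u < 1"
  then have x: "\<bar>1 - u\<^sup>2\<bar> < 1"
    using assms by (intro abs_one_minus_square_less) auto
  have "(\<Sum>n. cbin n * (1 - u\<^sup>2) ^ n) = 1 / u"
    using sums_unique[OF cbin_sums[OF x]] u assms by simp
  then show "((\<lambda>u. powser_primitive cbin (1 - u\<^sup>2)) has_real_derivative -2) (at u)"
    using has_real_derivative_comp_one_minus_square[OF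
        has_real_derivative_powser_primitive[of cbin 1, OF abs_cbin_le_1 x]] u assms
    by simp
qed (use assms in \<open>auto intro!: continuous_intros derivative_eq_intros\<close>)

lemma powser_primitive_cbin_div_Suc:
  assumes "0 < s" "s \<le> 1"
  shows "powser_primitive (\<lambda>n. cbin n / Suc n) (1 - s\<^sup>2) = 4 * (1 - s) + 4 * ln ((1 + s) / 2)"
proof (rule eq_at_left_if_same_derivative[of s 1
      "\<lambda>u. powser_primitive (\<lambda>n. cbin n / Suc n) (1 - u\<^sup>2)"
      "\<lambda>u. 4 * (1 - u) + 4 * ln ((1 + u) / 2)" "\<lambda>u. - 4 * u / (1 + u)"])
  show "continuous_on {s..1} (\<lambda>u. powser_primitive (\<lambda>n. cbin n / Suc n) (1 - u\<^sup>2))"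
    using assms by (intro continuous_on_powser_primitive_one_minus_square[of _ 1]
        abs_div_Suc_le[of cbin 1, OF abs_cbin_le_1])
  show "continuous_on {s..1} (\<lambda>u. 4 * (1 - u) + 4 * ln ((1 + u) / 2))"
    using assms by (auto intro!: continuous_intros)
  fix u :: real
  assume u: "s < u" "u < 1"
  then have x: "\<bar>1 - u\<^sup>2\<bar> < 1" "1 - u\<^sup>2 \<noteq> 0"
    using assms abs_square_less_1[of u] by (auto intro!: abs_one_minus_square_less)
  have H: "powser_primitive cbin (1 - u\<^sup>2) = 2 - 2 * u"
    using u assms by (intro powser_primitive_cbin) auto
  have "1 - u\<^sup>2 = (1 - u) * (1 + u)"
    by (simp add: algebra_simps power2_eq_square)
  then have "powser_primitive cbin (1 - u\<^sup>2) / (1 - u\<^sup>2) * (- 2 * u) = - 4 * u / (1 + u)"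
    unfolding H using u assms by (simp add: divide_simps)
  then show "((\<lambda>u. powser_primitive (\<lambda>n. cbin n / Suc n) (1 - u\<^sup>2))
      has_real_derivative - 4 * u / (1 + u)) (at u)"
    using has_real_derivative_comp_one_minus_square[OF
        has_real_derivative_powser_primitive_div_Suc[of cbin 1, OF abs_cbin_le_1 x]]
    by simp
  show "((\<lambda>u. 4 * (1 - u) + 4 * ln ((1 + u) / 2)) has_real_derivative - 4 * u / (1 + u)) (at u)"
    using u assms by (auto intro!: derivative_eq_intros simp: field_simps)
qed (use assms in auto)

lemma summable_cbin_div_Suc_cube: "summable (\<lambda>n. \<bar>cbin n / Suc n / Suc n\<bar> / Suc n)"
proof (rule summable_comparison_test[OF _ sums_summable[OF inverse_Suc_squares_sums]])
  have "\<bar>cbin n / Suc n / Suc n\<bar> / Suc n \<le> 1 / real (Suc n) ^ 2" for n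
  proof -
    have "\<bar>cbin n / Suc n\<bar> \<le> 1"
      by (rule abs_div_Suc_le[OF abs_cbin_le_1])
    then have "\<bar>cbin n / Suc n\<bar> / Suc n / Suc n \<le> 1 / Suc n / Suc n"
      by (intro divide_right_mono) auto
    then show ?thesis
      by (simp add: power2_eq_square del: of_nat_Suc)
  qed
  then show "\<exists>N. \<forall>n\<ge>N. norm (\<bar>cbin n / Suc n / Suc n\<bar> / Suc n) \<le> 1 / real (Suc n) ^ 2"
    by simp
qed

lemma powser_primitive_cbin_div_Suc_Suc:
  assumes "0 \<le> s" "s \<le> 1"
  shows "powser_primitive (\<lambda>n. cbin n / Suc n / Suc n) (1 - s\<^sup>2) =
    8 * (1 - s) + 8 * ln ((1 + s) / 2) + (2 * (ln ((1 + s) / 2))\<^sup>2 - 4 * dilog ((1 - s) / 2))"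
proof (rule eq_at_left_if_same_derivative[of s 1
      "\<lambda>u. powser_primitive (\<lambda>n. cbin n / Suc n / Suc n) (1 - u\<^sup>2)"
      "\<lambda>u. 8 * (1 - u) + 8 * ln ((1 + u) / 2) + (2 * (ln ((1 + u) / 2))\<^sup>2 - 4 * dilog ((1 - u) / 2))"
      "\<lambda>u. - 8 * u / (1 + u) + - 8 * u * ln ((1 + u) / 2) / (1 - u\<^sup>2)"])
  show "continuous_on {s..1} (\<lambda>u. powser_primitive (\<lambda>n. cbin n / Suc n / Suc n) (1 - u\<^sup>2))"
    by (rule continuous_on_compose2[OF continuous_on_powser_primitive[OF summable_cbin_div_Suc_cube]])
      (use assms in \<open>auto intro!: continuous_intros order_trans[OF power_le_one]\<close>)
  have "continuous_on {s..1} (\<lambda>u. dilog ((1 - u) / 2))"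
    by (rule continuous_on_compose2[OF continuous_on_dilog])
      (use assms in \<open>auto intro!: continuous_intros\<close>)
  then show "continuous_on {s..1}
      (\<lambda>u. 8 * (1 - u) + 8 * ln ((1 + u) / 2) + (2 * (ln ((1 + u) / 2))\<^sup>2 - 4 * dilog ((1 - u) / 2)))"
    using assms by (auto intro!: continuous_intros)
  fix u :: real
  assume u: "s < u" "u < 1"
  then have x: "\<bar>1 - u\<^sup>2\<bar> < 1" "1 - u\<^sup>2 \<noteq> 0"
    using assms abs_square_less_1[of u] by (auto intro!: abs_one_minus_square_less)
  have G: "powser_primitive (\<lambda>n. cbin n / Suc n) (1 - u\<^sup>2) = 4 * (1 - u) + 4 * ln ((1 + u) / 2)"
    using u assms by (intro powser_primitive_cbin_div_Suc) auto
  have "1 - u\<^sup>2 = (1 - u) * (1 + u)"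
    by (simp add: algebra_simps power2_eq_square)
  then have "powser_primitive (\<lambda>n. cbin n / Suc n) (1 - u\<^sup>2) / (1 - u\<^sup>2) * (- 2 * u) =
      - 8 * u / (1 + u) + - 8 * u * ln ((1 + u) / 2) / (1 - u\<^sup>2)"
    unfolding G using u assms by (simp add: divide_simps) (simp add: algebra_simps)
  then show "((\<lambda>u. powser_primitive (\<lambda>n. cbin n / Suc n / Suc n) (1 - u\<^sup>2)) has_real_derivative
      - 8 * u / (1 + u) + - 8 * u * ln ((1 + u) / 2) / (1 - u\<^sup>2)) (at u)"
    using has_real_derivative_comp_one_minus_square[OF
        has_real_derivative_powser_primitive_div_Suc[of "\<lambda>n. cbin n / Suc n" 1,
          OF abs_div_Suc_le[of cbin 1, OF abs_cbin_le_1] x]]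
    by simp
  have "((\<lambda>u. 8 * (1 - u) + 8 * ln ((1 + u) / 2)) has_real_derivative - 8 * u / (1 + u)) (at u)"
    using u assms by (auto intro!: derivative_eq_intros simp: field_simps)
  then show "((\<lambda>u. 8 * (1 - u) + 8 * ln ((1 + u) / 2) + (2 * (ln ((1 + u) / 2))\<^sup>2 - 4 * dilog ((1 - u) / 2)))
      has_real_derivative - 8 * u / (1 + u) + - 8 * u * ln ((1 + u) / 2) / (1 - u\<^sup>2)) (at u)"
    using u assms by (intro DERIV_add has_real_derivative_ln_square_minus_dilog) auto
qed (use assms in auto)

theorem mainTheorem3:
  shows "(\<lambda>n::nat. real ((2*n) choose n) / ((real n + 1) ^ 3 * 2 ^ (2*n)))
           sums (8 - 8 * ln 2 - pi\<^sup>2 / 3 + 4 * (ln 2)\<^sup>2)"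
proof -
  have "(2::real) ^ (2 * n) = 4 ^ n" for n
    by (simp add: power_mult)
  then have "(\<lambda>n::nat. real ((2*n) choose n) / ((real n + 1) ^ 3 * 2 ^ (2*n))) =
      (\<lambda>n. cbin n / Suc n / Suc n / Suc n)"
    by (simp add: fun_eq_iff cbin_def power3_eq_cube mult_ac add.commute)
  also have "\<dots> sums powser_primitive (\<lambda>n. cbin n / Suc n / Suc n) 1"
    by (rule powser_primitive_sums[OF summable_cbin_div_Suc_cube])
  also have "powser_primitive (\<lambda>n. cbin n / Suc n / Suc n) 1 =
      8 - 8 * ln 2 - pi\<^sup>2 / 3 + 4 * (ln 2)\<^sup>2"
    using powser_primitive_cbin_div_Suc_Suc[of 0] by (simp add: dilog_half ln_div)
  finally show ?thesis .
qed

end
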